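(* Let $m_1,m_2,m_3>0$ with $m_1+m_2+m_3=1$, and let $$\mathcal V=\{(m_1,m_2)\in(0,1)\times(0,1):\ m_1^2m_2^2+m_1^2m_3^2+m_2^2m_3^2-2m_1m_2m_3<0\},\qquad m_3=1-m_1-m_2 .$$ Then there exists an acute triangle fixed-point configuration of the masses $m_1,m_2,m_3$ only for mass triples with $(m_1,m_2)\in\mathcal V$ (and for every such triple one exists). Furthermore, such a configuration is unique.
   Context: Three masses $m_1,m_2,m_3$ are placed on the equator of the unit sphere $\mathbb S^2$ at longitudes $\varphi_1=0$, $\varphi_2=\alpha$, $\varphi_3=\alpha+\beta$, where $(\alpha,\beta)$ lies in $\mathcal U=\{0<\alpha<\pi,\ 0<\beta<\pi,\ \pi<\alpha+\beta<2\pi\}$; then the geodesic distances are $d_{12}=\alpha$, $d_{23}=\beta$, $d_{13}=2\pi-(\alpha+\beta)$ (these three points form an acute triangle in the plane). The force function is $V=\sum_{i<j}m_im_j\cot d_{ij}$ (with $d_{ij}=\arccos(\mathbf q_i\cdot\mathbf q_j)$ the geodesic distance on $\mathbb S^2$), and a fixed point is a configuration that is a critical point of $V$ on $\{(\mathbf q_1,\mathbf q_2,\mathbf q_3)\in(\mathbb S^2)^3: d_{ij}\notin\{0,\pi\}\}$. An acute triangle fixed-point configuration is such a configuration with $(\alpha,\beta)\in\mathcal U$ that is a fixed point; uniqueness refers to uniqueness of $(\alpha,\beta)\in\mathcal U$ (configurations are normalized by $\varphi_1=0<\varphi_2<\varphi_3<2\pi$, any other being obtained from such one by an isometry). *)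

theory Defs
  imports "HOL-Analysis.Analysis"
begin

definition S2 :: "(real^3) set" where
  "S2 = sphere 0 1"

definition gdist :: "real^3 \<Rightarrow> real^3 \<Rightarrow> real" where
  "gdist p q = arccos (p \<bullet> q)"

definition Vforce :: "real \<Rightarrow> real \<Rightarrow> real \<Rightarrow> real^3 \<Rightarrow> real^3 \<Rightarrow> real^3 \<Rightarrow> real" where
  "Vforce m1 m2 m3 q1 q2 q3 =
     m1 * m2 * cot (gdist q1 q2) + m1 * m3 * cot (gdist q1 q3) + m2 * m3 * cot (gdist q2 q3)"

definition admissible :: "real^3 \<Rightarrow> real^3 \<Rightarrow> real^3 \<Rightarrow> bool" where
  "admissible q1 q2 q3 \<longleftrightarrow> q1 \<in> S2 \<and> q2 \<in> S2 \<and> q3 \<in> S2 \<and>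
     gdist q1 q2 \<notin> {0, pi} \<and> gdist q1 q3 \<notin> {0, pi} \<and> gdist q2 q3 \<notin> {0, pi}"

text \<open>Fixed point: critical point of V on the manifold of admissible configurations,
  i.e. the derivative of V along every differentiable curve in (S^2)^3 through the
  configuration vanishes.\<close>
definition fixed_point :: "real \<Rightarrow> real \<Rightarrow> real \<Rightarrow> real^3 \<Rightarrow> real^3 \<Rightarrow> real^3 \<Rightarrow> bool" where
  "fixed_point m1 m2 m3 q1 q2 q3 \<longleftrightarrow> admissible q1 q2 q3 \<and>
     (\<forall>g1 g2 g3 :: real \<Rightarrow> real^3.
        (\<forall>t. g1 t \<in> S2 \<and> g2 t \<in> S2 \<and> g3 t \<in> S2) \<and>
        g1 0 = q1 \<and> g2 0 = q2 \<and> g3 0 = q3 \<and>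
        g1 differentiable (at 0) \<and> g2 differentiable (at 0) \<and> g3 differentiable (at 0)
        \<longrightarrow> ((\<lambda>t. Vforce m1 m2 m3 (g1 t) (g2 t) (g3 t)) has_real_derivative 0) (at 0))"

definition equator_pt :: "real \<Rightarrow> real^3" where
  "equator_pt phi = vector [cos phi, sin phi, 0]"

definition acuteU :: "(real \<times> real) set" where
  "acuteU = {(a, b). 0 < a \<and> a < pi \<and> 0 < b \<and> b < pi \<and> pi < a + b \<and> a + b < 2 * pi}"

definition acute_fixed_point :: "real \<Rightarrow> real \<Rightarrow> real \<Rightarrow> real \<Rightarrow> real \<Rightarrow> bool" where
  "acute_fixed_point m1 m2 m3 a b \<longleftrightarrow> (a, b) \<in> acuteU \<and>
     fixed_point m1 m2 m3 (equator_pt 0) (equator_pt a) (equator_pt (a + b))"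

definition mass_region :: "(real \<times> real) set" where
  "mass_region = {(m1, m2). 0 < m1 \<and> m1 < 1 \<and> 0 < m2 \<and> m2 < 1 \<and>
     (let m3 = 1 - m1 - m2 in
       m1^2 * m2^2 + m1^2 * m3^2 + m2^2 * m3^2 - 2 * m1 * m2 * m3 < 0)}"

end

theory Submission
  imports Defs
begin

text \<open>
  Moving the three points along the equator with angular speeds \<open>r\<^sub>i\<close> changes \<open>V\<close> at rate
  \<open>\<Sum> m\<^sub>i m\<^sub>j (r\<^sub>i - r\<^sub>j) s\<^sub>i\<^sub>j / \<bar>s\<^sub>i\<^sub>j\<bar>\<^sup>3\<close> with \<open>s\<^sub>i\<^sub>j = sin (\<phi>\<^sub>j - \<phi>\<^sub>i)\<close>, and every
  variation off the equator has the same first-order effect.  Hence an equatorial configuration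
  is a fixed point iff this linear form in \<open>r\<close> vanishes, which for \<open>(\<alpha>, \<beta>) \<in> acuteU\<close> says
  \<open>m\<^sub>3 sin\<^sup>2 \<alpha> = m\<^sub>1 sin\<^sup>2 \<beta> = m\<^sub>2 sin\<^sup>2 (\<alpha> + \<beta>) = K\<close> for some \<open>K > 0\<close>.
  The squared sines \<open>x, y, z\<close> of \<open>\<alpha>, \<beta>, \<alpha> + \<beta>\<close> satisfy \<open>2(xy + yz + zx) - (x\<^sup>2 + y\<^sup>2 + z\<^sup>2) = 4xyz\<close>;
  substituting \<open>x = K/m\<^sub>3\<close>, \<open>y = K/m\<^sub>1\<close>, \<open>z = K/m\<^sub>2\<close> and using \<open>m\<^sub>1 + m\<^sub>2 + m\<^sub>3 = 1\<close> determines
  \<open>K = (2m\<^sub>1m\<^sub>2m\<^sub>3 - \<Sigma> m\<^sub>i\<^sup>2m\<^sub>j\<^sup>2) / (4m\<^sub>1m\<^sub>2m\<^sub>3)\<close>, which is positive exactly on the mass region.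
  Conversely positive squared sines satisfying that relation come from a unique
  \<open>(\<alpha>, \<beta>) \<in> acuteU\<close>, since the signs of the sines are fixed on \<open>acuteU\<close> and a cosine law
  recovers \<open>cos \<alpha>\<close> and \<open>cos \<beta>\<close>.
\<close>

lemma inner_vec3: "(x::real^3) \<bullet> y = x$1 * y$1 + x$2 * y$2 + x$3 * y$3"
  by (simp add: inner_vec_def sum_3)

lemma equator_pt_nth: "equator_pt x $ 1 = cos x" "equator_pt x $ 2 = sin x" "equator_pt x $ 3 = 0"
  by (simp_all add: equator_pt_def)

lemma inner_equator_pt: "equator_pt x \<bullet> equator_pt y = cos (x - y)"
  by (simp add: inner_vec3 equator_pt_nth cos_diff)

lemma equator_pt_in_S2: "equator_pt x \<in> S2"
  by (simp add: S2_def norm_eq_sqrt_inner inner_equator_pt)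

lemma equator_pt_rotation_has_vector_derivative:
  "((\<lambda>t. equator_pt (p + s * t)) has_vector_derivative s *\<^sub>R vector [- sin p, cos p, 0]) (at 0)"
proof -
  have "(\<lambda>t. equator_pt (p + s * t)) =
      (\<lambda>t. cos (p + s * t) *\<^sub>R vector [1, 0, 0] + sin (p + s * t) *\<^sub>R vector [0, 1, 0])"
    by (auto simp: fun_eq_iff vec_eq_iff forall_3 equator_pt_def)
  moreover have "s *\<^sub>R vector [- sin p, cos p, 0] =
      (- sin (p + s * 0) * (s * 1)) *\<^sub>R (vector [1, 0, 0] :: real^3) + (cos (p + s * 0) * (s * 1)) *\<^sub>R vector [0, 1, 0]"
    by (auto simp: vec_eq_iff forall_3)
  ultimately show ?thesis
    by (auto intro!: derivative_eq_intros)
qed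

lemma inner_equator_pt_if_orthogonal:
  assumes "v \<bullet> equator_pt p = 0"
  shows "v \<bullet> equator_pt q = (v \<bullet> vector [- sin p, cos p, 0]) * sin (q - p)"
proof -
  have "v$1 * cos p + v$2 * sin p = 0"
    using assms by (simp add: inner_vec3 equator_pt_nth)
  moreover have "sin p ^ 2 + cos p ^ 2 = 1" by simp
  moreover have "v \<bullet> vector [- sin p, cos p, 0] = v$2 * cos p - v$1 * sin p"
    and "v \<bullet> equator_pt q = v$1 * cos q + v$2 * sin q"
    by (simp_all add: inner_vec3 equator_pt_nth)
  ultimately show ?thesis
    unfolding sin_diff by algebra
qed

lemma abs_cos_less_1_iff: "\<bar>cos (x::real)\<bar> < 1 \<longleftrightarrow> sin x \<noteq> 0"
proof -
  have "\<bar>cos x\<bar> < 1 \<longleftrightarrow> cos x ^ 2 < 1" by (rule abs_square_less_1[symmetric])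
  also have "\<dots> \<longleftrightarrow> 0 < sin x ^ 2" using sin_squared_eq[of x] by linarith
  also have "\<dots> \<longleftrightarrow> sin x \<noteq> 0" by simp
  finally show ?thesis .
qed

lemma sin_gdist_equator_pt: "sin (gdist (equator_pt x) (equator_pt y)) = \<bar>sin (y - x)\<bar>"
proof -
  have "sin (gdist (equator_pt x) (equator_pt y)) = sqrt (sin (x - y) ^ 2)"
    by (simp add: gdist_def inner_equator_pt sin_arccos sin_squared_eq)
  then show ?thesis by (simp add: sin_diff algebra_simps)
qed

lemma gdist_equator_pt_bounds:
  assumes "sin (y - x) \<noteq> 0"
  shows "0 < gdist (equator_pt x) (equator_pt y)" "gdist (equator_pt x) (equator_pt y) < pi"
proof -
  have "\<bar>cos (x - y)\<bar> < 1"
    using assms by (simp add: abs_cos_less_1_iff sin_diff algebra_simps)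
  then show "0 < gdist (equator_pt x) (equator_pt y)" "gdist (equator_pt x) (equator_pt y) < pi"
    using arccos_lt_bounded[of "cos (x - y)"] by (auto simp: gdist_def inner_equator_pt)
qed

lemma sphere_curve_velocity_orthogonal:
  assumes "\<And>t. g t \<in> S2" and "(g has_vector_derivative v) (at 0)"
  shows "g 0 \<bullet> v = 0"
proof -
  have "((\<lambda>t. g t \<bullet> g t) has_derivative (\<lambda>h. g 0 \<bullet> (h *\<^sub>R v) + (h *\<^sub>R v) \<bullet> g 0)) (at 0)"
    using assms(2) unfolding has_vector_derivative_def by (intro has_derivative_inner) auto
  moreover have "(\<lambda>t. g t \<bullet> g t) = (\<lambda>t. 1)"
    using assms(1) by (auto simp: S2_def fun_eq_iff dot_square_norm)
  ultimately have "((\<lambda>t. 1::real) has_derivative (\<lambda>h. 2 * h * (g 0 \<bullet> v))) (at 0)"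
    by (simp add: inner_commute algebra_simps)
  moreover have "((\<lambda>t. 1::real) has_derivative (\<lambda>h. 0)) (at 0)" by simp
  ultimately have "(\<lambda>h::real. 2 * h * (g 0 \<bullet> v)) = (\<lambda>h. 0)"
    using has_derivative_unique by blast
  then show ?thesis by (metis mult_1 mult_cancel_right1 mult_eq_0_iff zero_neq_numeral)
qed

lemma inner_has_real_derivative:
  assumes "(f has_vector_derivative u) (at 0)" "(g has_vector_derivative w) (at 0)"
  shows "((\<lambda>t. f t \<bullet> g t) has_real_derivative (f 0 \<bullet> w + u \<bullet> g 0)) (at 0)"
proof -
  have "((\<lambda>t. f t \<bullet> g t) has_derivative (\<lambda>h. f 0 \<bullet> (h *\<^sub>R w) + (h *\<^sub>R u) \<bullet> g 0)) (at 0)"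
    using assms unfolding has_vector_derivative_def by (intro has_derivative_inner) auto
  then show ?thesis unfolding has_field_derivative_def
    by (rule has_derivative_eq_rhs) (auto simp: fun_eq_iff algebra_simps)
qed

text \<open>\<open>cot (arccos c) = c / sqrt (1 - c\<^sup>2)\<close> has derivative \<open>(1 - c\<^sup>2) powr (-3/2) = 1 / sin (arccos c) ^ 3\<close>.\<close>
lemma cot_arccos_has_real_derivative:
  assumes "(h has_real_derivative h') (at 0)" and "\<bar>h 0\<bar> < 1"
  shows "((\<lambda>t. cot (arccos (h t))) has_real_derivative h' / sin (arccos (h 0)) ^ 3) (at 0)"
proof -
  have b: "-1 < h 0" "h 0 < 1" using assms(2) by auto
  have s: "sin (arccos (h 0)) = sqrt (1 - (h 0)\<^sup>2)" using b by (simp add: sin_arccos)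
  have pos: "0 < sin (arccos (h 0))" using b arccos_lt_bounded[of "h 0"] by (simp add: sin_gt_zero)
  have "((\<lambda>t. cot (arccos (h t))) has_real_derivative
      - inverse ((sin (arccos (h 0)))\<^sup>2) * (inverse (- sqrt (1 - (h 0)\<^sup>2)) * h')) (at 0)"
    using DERIV_chain2[OF DERIV_cot DERIV_chain2[OF DERIV_arccos[OF b] assms(1)]] pos by simp
  with pos show ?thesis
    unfolding s by (simp add: field_simps power2_eq_square power3_eq_cube)
qed

lemma Vforce_has_real_derivative:
  assumes "(g1 has_vector_derivative v1) (at 0)" "(g2 has_vector_derivative v2) (at 0)"
    "(g3 has_vector_derivative v3) (at 0)"
    and "\<bar>g1 0 \<bullet> g2 0\<bar> < 1" "\<bar>g1 0 \<bullet> g3 0\<bar> < 1" "\<bar>g2 0 \<bullet> g3 0\<bar> < 1"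
  shows "((\<lambda>t. Vforce m1 m2 m3 (g1 t) (g2 t) (g3 t)) has_real_derivative
     m1 * m2 * ((g1 0 \<bullet> v2 + v1 \<bullet> g2 0) / sin (gdist (g1 0) (g2 0)) ^ 3)
   + m1 * m3 * ((g1 0 \<bullet> v3 + v1 \<bullet> g3 0) / sin (gdist (g1 0) (g3 0)) ^ 3)
   + m2 * m3 * ((g2 0 \<bullet> v3 + v2 \<bullet> g3 0) / sin (gdist (g2 0) (g3 0)) ^ 3)) (at 0)"
  unfolding Vforce_def gdist_def
  by (intro DERIV_add DERIV_cmult cot_arccos_has_real_derivative inner_has_real_derivative assms)

text \<open>The rate at which \<open>cot\<close> of the distance between \<open>equator_pt p\<close> and \<open>equator_pt q\<close> grows
  when \<open>p\<close> advances along the equator relative to \<open>q\<close>.\<close>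
definition equator_coupling :: "real \<Rightarrow> real \<Rightarrow> real" where
  "equator_coupling p q = sin (q - p) / \<bar>sin (q - p)\<bar> ^ 3"

lemma inner_equator_pt_pair:
  assumes "v \<bullet> equator_pt p = 0" "w \<bullet> equator_pt q = 0"
  shows "equator_pt p \<bullet> w + v \<bullet> equator_pt q =
    (v \<bullet> vector [- sin p, cos p, 0] - w \<bullet> vector [- sin q, cos q, 0]) * sin (q - p)"
proof -
  have "sin (p - q) = - sin (q - p)" by (simp add: sin_diff)
  then show ?thesis
    using inner_equator_pt_if_orthogonal[OF assms(1), of q] inner_equator_pt_if_orthogonal[OF assms(2), of p]
    by (simp add: inner_commute algebra_simps)
qed

lemma Vforce_equator_has_real_derivative:
  fixes m1 m2 m3 :: real
  assumes "sin (p2 - p1) \<noteq> 0" "sin (p3 - p1) \<noteq> 0" "sin (p3 - p2) \<noteq> 0"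
    and "\<And>t. g1 t \<in> S2" "\<And>t. g2 t \<in> S2" "\<And>t. g3 t \<in> S2"
    and "g1 0 = equator_pt p1" "g2 0 = equator_pt p2" "g3 0 = equator_pt p3"
    and "(g1 has_vector_derivative v1) (at 0)" "(g2 has_vector_derivative v2) (at 0)"
      "(g3 has_vector_derivative v3) (at 0)"
  defines "r1 \<equiv> v1 \<bullet> vector [- sin p1, cos p1, 0]"
    and "r2 \<equiv> v2 \<bullet> vector [- sin p2, cos p2, 0]"
    and "r3 \<equiv> v3 \<bullet> vector [- sin p3, cos p3, 0]"
  shows "((\<lambda>t. Vforce m1 m2 m3 (g1 t) (g2 t) (g3 t)) has_real_derivative
      m1 * m2 * equator_coupling p1 p2 * (r1 - r2) + m1 * m3 * equator_coupling p1 p3 * (r1 - r3)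
    + m2 * m3 * equator_coupling p2 p3 * (r2 - r3)) (at 0)"
proof -
  have orth: "v1 \<bullet> equator_pt p1 = 0" "v2 \<bullet> equator_pt p2 = 0" "v3 \<bullet> equator_pt p3 = 0"
    using sphere_curve_velocity_orthogonal[of g1 v1] sphere_curve_velocity_orthogonal[of g2 v2]
      sphere_curve_velocity_orthogonal[of g3 v3] assms(4-12)
    by (simp_all add: inner_commute)
  have "\<bar>equator_pt p \<bullet> equator_pt q\<bar> < 1" if "sin (q - p) \<noteq> 0" for p q
    using that by (simp add: inner_equator_pt abs_cos_less_1_iff sin_diff algebra_simps)
  then have "((\<lambda>t. Vforce m1 m2 m3 (g1 t) (g2 t) (g3 t)) has_real_derivative
     m1 * m2 * ((equator_pt p1 \<bullet> v2 + v1 \<bullet> equator_pt p2) / \<bar>sin (p2 - p1)\<bar> ^ 3)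
   + m1 * m3 * ((equator_pt p1 \<bullet> v3 + v1 \<bullet> equator_pt p3) / \<bar>sin (p3 - p1)\<bar> ^ 3)
   + m2 * m3 * ((equator_pt p2 \<bullet> v3 + v2 \<bullet> equator_pt p3) / \<bar>sin (p3 - p2)\<bar> ^ 3)) (at 0)"
    using Vforce_has_real_derivative[of g1 v1 g2 v2 g3 v3 m1 m2 m3] assms(1-3,7-12)
    by (simp add: sin_gdist_equator_pt)
  then show ?thesis
    unfolding inner_equator_pt_pair[OF orth(1,2)] inner_equator_pt_pair[OF orth(1,3)]
      inner_equator_pt_pair[OF orth(2,3)]
    by (rule DERIV_cong) (simp add: equator_coupling_def r1_def r2_def r3_def mult_ac)
qed

lemma fixed_point_equator_iff:
  assumes "sin (p2 - p1) \<noteq> 0" "sin (p3 - p1) \<noteq> 0" "sin (p3 - p2) \<noteq> 0"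
  shows "fixed_point m1 m2 m3 (equator_pt p1) (equator_pt p2) (equator_pt p3) \<longleftrightarrow>
    m1 * m2 * equator_coupling p1 p2 + m1 * m3 * equator_coupling p1 p3 = 0 \<and>
    m2 * m3 * equator_coupling p2 p3 = m1 * m2 * equator_coupling p1 p2"
    (is "_ \<longleftrightarrow> ?c12 + ?c13 = 0 \<and> ?c23 = ?c12")
proof
  have unit: "(vector [- sin p, cos p, 0] :: real^3) \<bullet> vector [- sin p, cos p, 0] = 1" for p
    using sin_cos_squared_add3[of p] by (simp add: inner_vec3 algebra_simps)
  have rotation: "((\<lambda>t. Vforce m1 m2 m3 (equator_pt (p1 + s1 * t)) (equator_pt (p2 + s2 * t))
      (equator_pt (p3 + s3 * t))) has_real_derivative
      ?c12 * (s1 - s2) + ?c13 * (s1 - s3) + ?c23 * (s2 - s3)) (at 0)" for s1 s2 s3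
    using Vforce_equator_has_real_derivative[OF assms equator_pt_in_S2 equator_pt_in_S2
        equator_pt_in_S2 _ _ _ equator_pt_rotation_has_vector_derivative[of p1 s1]
        equator_pt_rotation_has_vector_derivative[of p2 s2]
        equator_pt_rotation_has_vector_derivative[of p3 s3]]
    by (simp add: unit algebra_simps)
  assume fp: "fixed_point m1 m2 m3 (equator_pt p1) (equator_pt p2) (equator_pt p3)"
  have "?c12 * (s1 - s2) + ?c13 * (s1 - s3) + ?c23 * (s2 - s3) = 0" for s1 s2 s3
  proof (rule DERIV_unique[OF rotation])
    show "((\<lambda>t. Vforce m1 m2 m3 (equator_pt (p1 + s1 * t)) (equator_pt (p2 + s2 * t))
        (equator_pt (p3 + s3 * t))) has_real_derivative 0) (at 0)"
      using equator_pt_rotation_has_vector_derivative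
      by (intro fp[unfolded fixed_point_def, THEN conjunct2, rule_format])
        (auto simp: equator_pt_in_S2 intro: differentiableI_vector)
  qed
  from this[of 1 0 0] this[of 0 1 0] show "?c12 + ?c13 = 0 \<and> ?c23 = ?c12" by simp
next
  assume "?c12 + ?c13 = 0 \<and> ?c23 = ?c12"
  then have c13: "?c13 = - ?c12" and c23: "?c23 = ?c12" by auto
  have "admissible (equator_pt p1) (equator_pt p2) (equator_pt p3)"
    using gdist_equator_pt_bounds assms by (fastforce simp: admissible_def equator_pt_in_S2)
  moreover have "((\<lambda>t. Vforce m1 m2 m3 (g1 t) (g2 t) (g3 t)) has_real_derivative 0) (at 0)"
    if "\<forall>t. g1 t \<in> S2 \<and> g2 t \<in> S2 \<and> g3 t \<in> S2"
      and "g1 0 = equator_pt p1" "g2 0 = equator_pt p2" "g3 0 = equator_pt p3"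
      and "g1 differentiable at 0" "g2 differentiable at 0" "g3 differentiable at 0"
    for g1 g2 g3 :: "real \<Rightarrow> real^3"
  proof -
    have "\<And>t. g1 t \<in> S2" "\<And>t. g2 t \<in> S2" "\<And>t. g3 t \<in> S2"
      using that(1) by auto
    from Vforce_equator_has_real_derivative[OF assms this that(2-4)
        that(5-7)[unfolded vector_derivative_works]]
    show ?thesis
      by (rule DERIV_cong) (simp only: c13 c23, simp add: algebra_simps)
  qed
  ultimately show "fixed_point m1 m2 m3 (equator_pt p1) (equator_pt p2) (equator_pt p3)"
    unfolding fixed_point_def by blast
qed

lemma acuteU_sin_signs:
  assumes "(a, b) \<in> acuteU"
  shows "0 < sin a" "0 < sin b" "sin (a + b) < 0"
  using assms by (auto simp: acuteU_def sin_gt_zero sin_lt_zero)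

lemma acute_fixed_point_iff:
  assumes "0 < m1" "0 < m2" "0 < m3"
  shows "acute_fixed_point m1 m2 m3 a b \<longleftrightarrow>
    (a, b) \<in> acuteU \<and> m2 * sin (a + b) ^ 2 = m3 * sin a ^ 2 \<and> m1 * sin b ^ 2 = m3 * sin a ^ 2"
proof (cases "(a, b) \<in> acuteU")
  case True
  note s = acuteU_sin_signs[OF True]
  have "equator_coupling 0 a = 1 / sin a ^ 2" "equator_coupling 0 (a + b) = - 1 / sin (a + b) ^ 2"
    "equator_coupling a (a + b) = 1 / sin b ^ 2"
    using s by (simp_all add: equator_coupling_def power2_eq_square power3_eq_cube)
  then have "fixed_point m1 m2 m3 (equator_pt 0) (equator_pt a) (equator_pt (a + b)) \<longleftrightarrow>
      m1 * m2 / sin a ^ 2 - m1 * m3 / sin (a + b) ^ 2 = 0 \<and> m2 * m3 / sin b ^ 2 = m1 * m2 / sin a ^ 2"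
    using fixed_point_equator_iff[of a 0 "a + b" m1 m2 m3] s by simp
  also have "\<dots> \<longleftrightarrow> m2 * sin (a + b) ^ 2 = m3 * sin a ^ 2 \<and> m1 * sin b ^ 2 = m3 * sin a ^ 2"
    using s assms by (auto simp: field_simps)
  finally show ?thesis
    using True by (simp add: acute_fixed_point_def)
next
  case False
  then show ?thesis by (simp add: acute_fixed_point_def)
qed

definition sine_square_relation :: "real \<Rightarrow> real \<Rightarrow> real \<Rightarrow> bool" where
  "sine_square_relation x y z \<longleftrightarrow> 2 * (x * y + y * z + z * x) - (x^2 + y^2 + z^2) = 4 * x * y * z"

lemma sine_square_relation_sin_add:
  fixes a b :: real
  shows "sine_square_relation (sin a ^ 2) (sin b ^ 2) (sin (a + b) ^ 2)"
proof -
  have "sin a ^ 2 + cos a ^ 2 = 1" "sin b ^ 2 + cos b ^ 2 = 1" by simp_all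
  then show ?thesis unfolding sine_square_relation_def sin_add by algebra
qed

lemma cos_eq_sine_squares:
  fixes a b :: real
  assumes "sin b \<noteq> 0" "sin (a + b) \<noteq> 0"
  shows "cos a = (sin b ^ 2 + sin (a + b) ^ 2 - sin a ^ 2) / (2 * sin b * sin (a + b))"
proof -
  have "sin a ^ 2 + cos a ^ 2 = 1" "sin b ^ 2 + cos b ^ 2 = 1" by simp_all
  then have "sin a ^ 2 = sin b ^ 2 + sin (a + b) ^ 2 - 2 * sin b * sin (a + b) * cos a"
    unfolding sin_add by algebra
  with assms show ?thesis by (simp add: field_simps)
qed

text \<open>The common value of \<open>m\<^sub>3 sin\<^sup>2 \<alpha> = m\<^sub>1 sin\<^sup>2 \<beta> = m\<^sub>2 sin\<^sup>2 (\<alpha> + \<beta>)\<close> at a fixed point.\<close>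
definition balance_constant :: "real \<Rightarrow> real \<Rightarrow> real \<Rightarrow> real" where
  "balance_constant m1 m2 m3 =
     (2 * m1 * m2 * m3 - (m1^2 * m2^2 + m1^2 * m3^2 + m2^2 * m3^2)) / (4 * m1 * m2 * m3)"

lemma sine_square_relation_scaled_iff:
  assumes "0 < m1" "0 < m2" "0 < m3" "m1 + m2 + m3 = 1" "K \<noteq> 0"
  shows "sine_square_relation (K / m3) (K / m1) (K / m2) \<longleftrightarrow> K = balance_constant m1 m2 m3"
proof -
  define P where "P = m1 * m2 * m3"
  define Q where "Q = m1^2 * m2^2 + m1^2 * m3^2 + m2^2 * m3^2"
  have "P > 0" using assms by (simp add: P_def)
  have "P^2 * (2 * (K/m3 * (K/m1) + K/m1 * (K/m2) + K/m2 * (K/m3)) - ((K/m3)^2 + (K/m1)^2 + (K/m2)^2)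
      - 4 * (K/m3) * (K/m1) * (K/m2)) = K^2 * (2 * P * (m1 + m2 + m3) - Q - 4 * K * P)"
    using assms(1-3) unfolding P_def Q_def by (simp add: field_simps power2_eq_square)
  then have "sine_square_relation (K / m3) (K / m1) (K / m2) \<longleftrightarrow> 2 * P - Q = 4 * K * P"
    using assms \<open>P > 0\<close> unfolding sine_square_relation_def by auto
  also have "\<dots> \<longleftrightarrow> K = (2 * P - Q) / (4 * P)"
    using \<open>P > 0\<close> by (auto simp: field_simps)
  also have "(2 * P - Q) / (4 * P) = balance_constant m1 m2 m3"
    by (simp add: balance_constant_def P_def Q_def mult.assoc)
  finally show ?thesis .
qed

lemma mass_region_iff_balance_constant_pos:
  assumes "0 < m1" "0 < m2" "0 < m3" "m1 + m2 + m3 = 1"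
  shows "(m1, m2) \<in> mass_region \<longleftrightarrow> 0 < balance_constant m1 m2 m3"
proof -
  have "1 - m1 - m2 = m3" "m1 < 1" "m2 < 1" "0 < 4 * m1 * m2 * m3" using assms by auto
  with assms show ?thesis
    by (simp add: mass_region_def balance_constant_def pos_less_divide_eq)
qed

lemma acuteU_with_sine_squares:
  assumes "0 < x" "0 < y" "0 < z" "sine_square_relation x y z"
  obtains a b where "(a, b) \<in> acuteU" "sin a ^ 2 = x" "sin b ^ 2 = y" "sin (a + b) ^ 2 = z"
proof -
  define ca where "ca = (y + z - x) / (- 2 * sqrt y * sqrt z)"
  define cb where "cb = (z + x - y) / (- 2 * sqrt z * sqrt x)"
  have H: "2 * (x * y + y * z + z * x) - (x^2 + y^2 + z^2) = 4 * x * y * z"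
    using assms(4) by (simp add: sine_square_relation_def)
  have "ca ^ 2 = (y + z - x) ^ 2 / (4 * y * z)" "cb ^ 2 = (z + x - y) ^ 2 / (4 * z * x)"
    using assms(1-3) by (simp_all add: ca_def cb_def power_divide power_mult_distrib)
  moreover have "(y + z - x) ^ 2 = 4 * y * z * (1 - x)" "(z + x - y) ^ 2 = 4 * z * x * (1 - y)"
    using H by algebra+
  ultimately have "ca ^ 2 = 1 - x" "cb ^ 2 = 1 - y"
    using assms(1-3) by simp_all
  then have ca: "\<bar>ca\<bar> < 1" "1 - ca ^ 2 = x" and cb: "\<bar>cb\<bar> < 1" "1 - cb ^ 2 = y"
    using assms(1,2) by (simp_all flip: abs_square_less_1)
  define a where "a = arccos ca"
  define b where "b = arccos cb"
  have range: "0 < a" "a < pi" "0 < b" "b < pi"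
    using arccos_lt_bounded ca(1) cb(1) by (auto simp: a_def b_def)
  have sa: "sin a = sqrt x" and sb: "sin b = sqrt y"
    using ca cb by (simp_all add: a_def b_def sin_arccos)
  have "cos a = ca" "cos b = cb"
    using ca(1) cb(1) by (simp_all add: a_def b_def)
  moreover have "sqrt x * cb = - (z + x - y) / (2 * sqrt z)" "ca * sqrt y = - (y + z - x) / (2 * sqrt z)"
    using assms(1-3) by (simp_all add: ca_def cb_def field_simps)
  ultimately have "sin (a + b) = - sqrt z"
    using assms(3) by (simp add: sin_add sa sb add_divide_distrib[symmetric] real_div_sqrt)
  moreover have "pi < a + b"
  proof (rule ccontr)
    assume "\<not> pi < a + b"
    then have "0 \<le> sin (a + b)" using range by (intro sin_ge_zero) auto
    with \<open>sin (a + b) = - sqrt z\<close> assms(3) show False by simp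
  qed
  ultimately show ?thesis
    using that[of a b] range assms(1-3) sa sb by (simp add: acuteU_def)
qed

lemma acuteU_eq_if_sine_squares_eq:
  assumes "(a, b) \<in> acuteU" "(a', b') \<in> acuteU"
    and "sin a ^ 2 = sin a' ^ 2" "sin b ^ 2 = sin b' ^ 2" "sin (a + b) ^ 2 = sin (a' + b') ^ 2"
  shows "a = a' \<and> b = b'"
proof -
  note s = acuteU_sin_signs[OF assms(1)] and s' = acuteU_sin_signs[OF assms(2)]
  have "sin a = sin a'" "sin b = sin b'"
    using assms(3,4) s s' by (simp_all add: power2_eq_iff_nonneg)
  moreover have "sin (a + b) = sin (a' + b')"
    using assms(5) s s' power2_eq_iff_nonneg[of "- sin (a + b)" "- sin (a' + b')"] by simp
  moreover have "sin a \<noteq> 0" "sin b \<noteq> 0" "sin (a + b) \<noteq> 0"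
    "sin a' \<noteq> 0" "sin b' \<noteq> 0" "sin (a' + b') \<noteq> 0"
    using s s' by auto
  then have "cos a = (sin b ^ 2 + sin (a + b) ^ 2 - sin a ^ 2) / (2 * sin b * sin (a + b))"
    "cos a' = (sin b' ^ 2 + sin (a' + b') ^ 2 - sin a' ^ 2) / (2 * sin b' * sin (a' + b'))"
    "cos b = (sin a ^ 2 + sin (a + b) ^ 2 - sin b ^ 2) / (2 * sin a * sin (a + b))"
    "cos b' = (sin a' ^ 2 + sin (a' + b') ^ 2 - sin b' ^ 2) / (2 * sin a' * sin (a' + b'))"
    using cos_eq_sine_squares[of b a] cos_eq_sine_squares[of b' a']
    by (simp_all add: cos_eq_sine_squares add.commute)
  ultimately have "cos a = cos a'" "cos b = cos b'" by simp_all
  moreover have "0 < a" "a < pi" "0 < b" "b < pi" "0 < a'" "a' < pi" "0 < b'" "b' < pi"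
    using assms(1,2) by (auto simp: acuteU_def)
  ultimately show ?thesis using cos_inj_pi[of a a'] cos_inj_pi[of b b'] by auto
qed

lemma acute_fixed_point_iff_sine_squares:
  assumes "0 < m1" "0 < m2" "0 < m3" "m1 + m2 + m3 = 1"
  defines "K \<equiv> balance_constant m1 m2 m3"
  shows "acute_fixed_point m1 m2 m3 a b \<longleftrightarrow>
    (a, b) \<in> acuteU \<and> sin a ^ 2 = K / m3 \<and> sin b ^ 2 = K / m1 \<and> sin (a + b) ^ 2 = K / m2"
proof
  assume "acute_fixed_point m1 m2 m3 a b"
  then have U: "(a, b) \<in> acuteU"
    and eq: "m2 * sin (a + b) ^ 2 = m3 * sin a ^ 2" "m1 * sin b ^ 2 = m3 * sin a ^ 2"
    using acute_fixed_point_iff[OF assms(1-3)] by auto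
  define L where "L = m3 * sin a ^ 2"
  have "0 < L"
    using acuteU_sin_signs(1)[OF U] assms(3) by (simp add: L_def)
  have sq: "sin a ^ 2 = L / m3" "sin b ^ 2 = L / m1" "sin (a + b) ^ 2 = L / m2"
    using eq assms(1-3) by (auto simp: L_def field_simps)
  then have "L = K"
    using sine_square_relation_sin_add[of a b] sine_square_relation_scaled_iff[OF assms(1-4)] \<open>0 < L\<close>
    by (simp add: K_def)
  with U sq show "(a, b) \<in> acuteU \<and> sin a ^ 2 = K / m3 \<and> sin b ^ 2 = K / m1 \<and> sin (a + b) ^ 2 = K / m2"
    by simp
next
  assume "(a, b) \<in> acuteU \<and> sin a ^ 2 = K / m3 \<and> sin b ^ 2 = K / m1 \<and> sin (a + b) ^ 2 = K / m2"
  then show "acute_fixed_point m1 m2 m3 a b"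
    using acute_fixed_point_iff[OF assms(1-3)] assms(1-3) by auto
qed

lemma ex_acute_fixed_point_iff_balance_constant_pos:
  assumes "0 < m1" "0 < m2" "0 < m3" "m1 + m2 + m3 = 1"
  shows "(\<exists>a b. acute_fixed_point m1 m2 m3 a b) \<longleftrightarrow> 0 < balance_constant m1 m2 m3"
proof
  assume "\<exists>a b. acute_fixed_point m1 m2 m3 a b"
  then obtain a b where "(a, b) \<in> acuteU" "sin a ^ 2 = balance_constant m1 m2 m3 / m3"
    unfolding acute_fixed_point_iff_sine_squares[OF assms] by blast
  then have "0 < balance_constant m1 m2 m3 / m3"
    using acuteU_sin_signs(1) by (metis zero_less_power)
  then show "0 < balance_constant m1 m2 m3"
    using assms(3) by (simp add: zero_less_divide_iff)
next
  let ?K = "balance_constant m1 m2 m3"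
  assume "0 < ?K"
  moreover have "sine_square_relation (?K / m3) (?K / m1) (?K / m2)"
    using sine_square_relation_scaled_iff[OF assms] \<open>0 < ?K\<close> by simp
  ultimately obtain a b where "(a, b) \<in> acuteU"
    "sin a ^ 2 = ?K / m3" "sin b ^ 2 = ?K / m1" "sin (a + b) ^ 2 = ?K / m2"
    using acuteU_with_sine_squares assms(1-3) by (metis divide_pos_pos)
  then show "\<exists>a b. acute_fixed_point m1 m2 m3 a b"
    unfolding acute_fixed_point_iff_sine_squares[OF assms] by blast
qed

theorem theorem1:
  fixes m1 m2 m3 :: real
  assumes "0 < m1" and "0 < m2" and "0 < m3" and "m1 + m2 + m3 = 1"
  shows "((\<exists>a b. acute_fixed_point m1 m2 m3 a b) \<longleftrightarrow> (m1, m2) \<in> mass_region)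
    \<and> (\<forall>a b a' b'. acute_fixed_point m1 m2 m3 a b \<and> acute_fixed_point m1 m2 m3 a' b'
          \<longrightarrow> a = a' \<and> b = b')"
proof
  show "(\<exists>a b. acute_fixed_point m1 m2 m3 a b) \<longleftrightarrow> (m1, m2) \<in> mass_region"
    using ex_acute_fixed_point_iff_balance_constant_pos[OF assms]
      mass_region_iff_balance_constant_pos[OF assms] by simp
  show "\<forall>a b a' b'. acute_fixed_point m1 m2 m3 a b \<and> acute_fixed_point m1 m2 m3 a' b'
      \<longrightarrow> a = a' \<and> b = b'"
    unfolding acute_fixed_point_iff_sine_squares[OF assms]
    by (metis acuteU_eq_if_sine_squares_eq)
qed

end
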